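(* For every constant $d>1$, every (deterministic) $d$-approximation algorithm for the sum of a sorted list of nonnegative numbers must, in the worst case, make $\Omega\!\left(\min\!\left(\log n,\ \log\frac{x_{max}}{x_{min}}\right)\right)$ (adaptive) queries to the input list, where $n$ is the length of the list and $x_{max}$ and $x_{min}$ are the largest and the least positive elements of the input list, respectively.
   Context: The input is a list $a_1\le a_2\le\cdots\le a_n$ of nonnegative reals sorted in nondecreasing order; the algorithm accesses it only by adaptive queries, each revealing one entry $a_i$. A real number $s$ is a $d$-approximation for the sum if $\frac{1}{d}\sum_{i=1}^n a_i\le s\le d\sum_{i=1}^n a_i$. *)

theory Defs
  imports Complex_Main
begin

text \<open>A deterministic adaptive query algorithm (for inputs of a fixed length n) is a
decision tree: at a node Query i f it queries entry i (0-based) of the input and continues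
with the subtree f v, where v is the revealed value; at a leaf it outputs its estimate.\<close>

datatype qtree = Leaf real | Query nat "real \<Rightarrow> qtree"

definition answer :: "real list \<Rightarrow> nat \<Rightarrow> real" where
  "answer xs i = (if i < length xs then xs ! i else 0)"

primrec run_output :: "qtree \<Rightarrow> real list \<Rightarrow> real" where
  "run_output (Leaf s) xs = s"
| "run_output (Query i f) xs = run_output (f (answer xs i)) xs"

primrec num_queries :: "qtree \<Rightarrow> real list \<Rightarrow> nat" where
  "num_queries (Leaf s) xs = 0"
| "num_queries (Query i f) xs = Suc (num_queries (f (answer xs i)) xs)"

definition d_approx :: "real \<Rightarrow> real \<Rightarrow> real \<Rightarrow> bool" where
  "d_approx d S s \<longleftrightarrow> S / d \<le> s \<and> s \<le> d * S"

definition valid_input :: "nat \<Rightarrow> real list \<Rightarrow> bool" where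
  "valid_input n xs \<longleftrightarrow> length xs = n \<and> sorted xs \<and> (\<forall>x\<in>set xs. 0 \<le> x)"

definition approx_alg :: "real \<Rightarrow> nat \<Rightarrow> qtree \<Rightarrow> bool" where
  "approx_alg d n T \<longleftrightarrow> (\<forall>xs. valid_input n xs \<longrightarrow> d_approx d (sum_list xs) (run_output T xs))"

definition xmax :: "real list \<Rightarrow> real" where
  "xmax xs = Max (set xs)"

definition xmin_pos :: "real list \<Rightarrow> real" where
  "xmin_pos xs = Min {x \<in> set xs. 0 < x}"

end

theory Submission
  imports Defs "HOL-Analysis.Harmonic_Numbers"
begin

text \<open>Adversary argument. For a sorted nonnegative input xs and a set Q of queried positions,
the staircase that at position p takes the value of xs at the last queried position \<open>\<le> p\<close>
is again a valid input, agrees with xs on Q, and has sum at most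
\<open>\<Sum>q\<in>Q. (n - q) * xs!q\<close>. The algorithm cannot distinguish the two inputs, so its answer
forces \<open>sum xs \<le> d\<^sup>2 * \<Sum>q\<in>Q. (n - q) * xs!q\<close>. On the input whose entry at position p is
\<open>1/(n - p)\<close>, cut off to 0 where \<open>n - p > R\<close>, every summand is at most 1 while the total
sum is a harmonic number \<open>H\<^sub>m \<ge> ln (m + 1)\<close> with \<open>m = min n \<lfloor>R\<rfloor>\<close>; hence at least
\<open>min (ln n) (ln R) / d\<^sup>2\<close> queries are needed.\<close>

primrec queried :: "qtree \<Rightarrow> real list \<Rightarrow> nat set" where
  "queried (Leaf s) xs = {}"
| "queried (Query i f) xs = insert i (queried (f (answer xs i)) xs)"

lemma finite_queried: "finite (queried T xs)"
  by (induction T) auto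

lemma card_queried_le_num_queries: "card (queried T xs) \<le> num_queries T xs"
proof (induction T)
  case (Query i f)
  then have "card (queried (f (answer xs i)) xs) \<le> num_queries (f (answer xs i)) xs"
    by simp
  then show ?case
    using finite_queried by (simp add: card_insert_if)
qed simp

lemma run_output_cong:
  "(\<And>i. i \<in> queried T xs \<Longrightarrow> answer ys i = answer xs i) \<Longrightarrow> run_output T ys = run_output T xs"
  by (induction T) auto

lemma approx_alg_sum_le_if_same_output:
  assumes "approx_alg d n T" "d > 0" "valid_input n xs" "valid_input n ys"
    and "run_output T xs = run_output T ys"
  shows "sum_list xs \<le> d\<^sup>2 * sum_list ys"
proof -
  have "sum_list xs / d \<le> run_output T xs" "run_output T ys \<le> d * sum_list ys"
    using assms(1,3,4) unfolding approx_alg_def d_approx_def by auto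
  then have "sum_list xs / d \<le> d * sum_list ys"
    using assms(5) by linarith
  then have "sum_list xs \<le> d * (d * sum_list ys)"
    using \<open>d > 0\<close> by (simp add: divide_le_eq mult.commute)
  then show ?thesis
    by (simp add: power2_eq_square mult.assoc)
qed

definition staircase :: "real list \<Rightarrow> nat set \<Rightarrow> real list" where
  "staircase xs Q = map (\<lambda>p. Max (insert 0 ((!) xs ` {q\<in>Q. q \<le> p}))) [0..<length xs]"

lemma length_staircase [simp]: "length (staircase xs Q) = length xs"
  by (simp add: staircase_def)

lemma valid_input_staircase: "valid_input n xs \<Longrightarrow> valid_input n (staircase xs Q)"
  unfolding valid_input_def staircase_def
  by (auto simp: sorted_iff_nth_mono intro!: Max_mono)

lemma staircase_nth_queried:
  assumes "valid_input n xs" "q \<in> Q" "q < n"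
  shows "staircase xs Q ! q = xs ! q"
proof -
  have "Max (insert 0 ((!) xs ` {q'\<in>Q. q' \<le> q})) = xs ! q"
    using assms unfolding valid_input_def
    by (intro Max_eqI) (auto simp: sorted_iff_nth_mono)
  then show ?thesis
    using assms by (simp add: staircase_def valid_input_def)
qed

text \<open>A step of height \<open>xs!q\<close> starting at q covers at most \<open>n - q\<close> positions.\<close>

lemma sum_list_staircase_le:
  assumes "valid_input n xs"
  shows "sum_list (staircase xs Q) \<le> (\<Sum>q\<in>Q \<inter> {..<n}. real (n - q) * xs ! q)"
proof -
  let ?Q = "Q \<inter> {..<n}"
  have nonneg: "q < n \<Longrightarrow> 0 \<le> xs ! q" for q
    using assms by (auto simp: valid_input_def)
  have "sum_list (staircase xs Q) = (\<Sum>p<n. Max (insert 0 ((!) xs ` {q\<in>Q. q \<le> p})))"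
    using assms by (simp add: staircase_def valid_input_def sum_list_sum_nth atLeast0LessThan)
  also have "\<dots> \<le> (\<Sum>p<n. \<Sum>q\<in>{q\<in>?Q. q \<le> p}. xs ! q)"
  proof (intro sum_mono)
    fix p assume "p \<in> {..<n}"
    then have "{q\<in>Q. q \<le> p} = {q\<in>?Q. q \<le> p}" by auto
    then show "Max (insert 0 ((!) xs ` {q\<in>Q. q \<le> p})) \<le> (\<Sum>q\<in>{q\<in>?Q. q \<le> p}. xs ! q)"
      using nonneg by (auto intro!: sum_nonneg member_le_sum)
  qed
  also have "\<dots> = (\<Sum>p<n. \<Sum>q\<in>?Q. if q \<le> p then xs ! q else 0)"
    by (rule sum.cong[OF refl], rule sum.inter_filter) simp
  also have "\<dots> = (\<Sum>q\<in>?Q. \<Sum>p<n. if q \<le> p then xs ! q else 0)"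
    by (rule sum.swap)
  also have "\<dots> = (\<Sum>q\<in>?Q. real (n - q) * xs ! q)"
  proof (rule sum.cong)
    fix q
    have "(\<Sum>p<n. if q \<le> p then xs ! q else 0) = (\<Sum>p\<in>{p\<in>{..<n}. q \<le> p}. xs ! q)"
      by (rule sum.inter_filter[symmetric]) simp
    also have "{p\<in>{..<n}. q \<le> p} = {q..<n}"
      by auto
    finally show "(\<Sum>p<n. if q \<le> p then xs ! q else 0) = real (n - q) * xs ! q"
      by simp
  qed simp
  finally show ?thesis .
qed

theorem sum_list_le_queried_weight:
  assumes "approx_alg d n T" "d > 0" "valid_input n xs"
  shows "sum_list xs \<le> d\<^sup>2 * (\<Sum>q\<in>queried T xs \<inter> {..<n}. real (n - q) * xs ! q)"
proof -
  let ?L = "staircase xs (queried T xs)"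
  have len: "length xs = n"
    using assms(3) by (simp add: valid_input_def)
  have "answer ?L i = answer xs i" if "i \<in> queried T xs" for i
    using that assms(3) staircase_nth_queried[of n xs i "queried T xs"]
    by (simp add: answer_def len)
  then have "run_output T xs = run_output T ?L"
    by (metis run_output_cong)
  then have "sum_list xs \<le> d\<^sup>2 * sum_list ?L"
    using assms by (intro approx_alg_sum_le_if_same_output valid_input_staircase)
  also have "\<dots> \<le> d\<^sup>2 * (\<Sum>q\<in>queried T xs \<inter> {..<n}. real (n - q) * xs ! q)"
    using assms(3) by (intro mult_left_mono sum_list_staircase_le) auto
  finally show ?thesis .
qed

definition capped_inverse :: "real \<Rightarrow> nat \<Rightarrow> real" where
  "capped_inverse R k = (if real k \<le> R then 1 / real k else 0)"

definition harmonic_input :: "nat \<Rightarrow> real \<Rightarrow> real list" where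
  "harmonic_input n R = map (\<lambda>p. capped_inverse R (n - p)) [0..<n]"

lemma capped_inverse_nonneg: "0 \<le> capped_inverse R k"
  by (simp add: capped_inverse_def)

lemma capped_inverse_antimono: "0 < k \<Longrightarrow> k \<le> l \<Longrightarrow> capped_inverse R l \<le> capped_inverse R k"
  by (auto simp: capped_inverse_def frac_le)

lemma capped_inverse_bounds:
  assumes "0 < k" "0 < capped_inverse R k"
  shows "1 / R \<le> capped_inverse R k" "capped_inverse R k \<le> 1"
  using assms by (auto simp: capped_inverse_def frac_le split: if_splits)

lemma length_harmonic_input [simp]: "length (harmonic_input n R) = n"
  by (simp add: harmonic_input_def)

lemma nth_harmonic_input [simp]: "p < n \<Longrightarrow> harmonic_input n R ! p = capped_inverse R (n - p)"
  by (simp add: harmonic_input_def)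

lemma set_harmonic_input: "set (harmonic_input n R) = (\<lambda>p. capped_inverse R (n - p)) ` {..<n}"
  by (auto simp: harmonic_input_def)

lemma valid_input_harmonic_input: "valid_input n (harmonic_input n R)"
  unfolding valid_input_def harmonic_input_def
  by (auto simp: sorted_iff_nth_mono capped_inverse_nonneg intro!: capped_inverse_antimono)

lemma harmonic_input_weight_le_1: "q < n \<Longrightarrow> real (n - q) * harmonic_input n R ! q \<le> 1"
  by (simp add: capped_inverse_def)

lemma harmonic_input_last:
  assumes "n \<ge> 1" "R \<ge> 1"
  shows "harmonic_input n R ! (n - 1) = 1"
  using assms by (simp add: capped_inverse_def)

lemma one_mem_harmonic_input:
  assumes "n \<ge> 1" "R \<ge> 1"
  shows "1 \<in> set (harmonic_input n R)"
  using assms nth_mem[of "n - 1" "harmonic_input n R"] harmonic_input_last[OF assms] by simp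

lemma harmonic_input_ratio:
  assumes "n \<ge> 1" "R \<ge> 1"
  shows "xmax (harmonic_input n R) / xmin_pos (harmonic_input n R) \<le> R"
proof -
  let ?X = "harmonic_input n R"
  let ?S = "{x \<in> set ?X. 0 < x}"
  have "1 \<in> ?S"
    using one_mem_harmonic_input[OF assms] by simp
  then have ne: "?S \<noteq> {}" "set ?X \<noteq> {}" by auto
  have "xmax ?X \<le> 1"
    unfolding xmax_def using ne
    by (auto simp: set_harmonic_input capped_inverse_def)
  moreover have min: "1 / R \<le> xmin_pos ?X"
    unfolding xmin_pos_def using ne
    by (auto simp: set_harmonic_input intro: capped_inverse_bounds)
  ultimately have "xmax ?X \<le> R * xmin_pos ?X"
    using assms by (simp add: divide_le_eq mult.commute)
  moreover have "0 < xmin_pos ?X"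
    using min order_less_le_trans[of 0 "1 / R"] assms by simp
  ultimately show ?thesis
    by (simp add: divide_le_eq mult.commute)
qed

lemma real_le_iff_le_nat_floor: "0 \<le> R \<Longrightarrow> real k \<le> R \<longleftrightarrow> k \<le> nat \<lfloor>R\<rfloor>"
  by (simp add: le_nat_iff le_floor_iff)

lemma sum_list_harmonic_input:
  assumes "R \<ge> 0"
  shows "sum_list (harmonic_input n R) = harm (min n (nat \<lfloor>R\<rfloor>))"
proof -
  have "sum_list (harmonic_input n R) = (\<Sum>p<n. capped_inverse R (n - p))"
    by (simp add: harmonic_input_def sum_list_sum_nth atLeast0LessThan)
  also have "\<dots> = (\<Sum>k\<in>{1..n}. capped_inverse R k)"
    by (rule sum.reindex_bij_witness[of _ "\<lambda>k. n - k" "\<lambda>p. n - p"]) auto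
  also have "\<dots> = (\<Sum>k\<in>{1..min n (nat \<lfloor>R\<rfloor>)}. inverse (real k))"
    by (rule sum.mono_neutral_cong_right)
      (auto simp: capped_inverse_def divide_inverse real_le_iff_le_nat_floor[OF assms])
  finally show ?thesis
    by (simp add: harm_def)
qed

lemma min_ln_le_sum_list_harmonic_input:
  assumes "n \<ge> 1" "R \<ge> 1"
  shows "min (ln (real n)) (ln R) \<le> sum_list (harmonic_input n R)"
proof -
  let ?m = "min n (nat \<lfloor>R\<rfloor>)"
  have "min (ln (real n)) (ln R) = ln (min (real n) R)"
    using assms by (simp add: min_def)
  also have "\<dots> \<le> ln (real ?m + 1)"
    using assms by (intro ln_mono) linarith+
  also have "\<dots> \<le> harm ?m"
    by (rule ln_le_harm)
  finally show ?thesis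
    using assms by (simp add: sum_list_harmonic_input)
qed

lemma queries_harmonic_input_ge:
  assumes "approx_alg d n T" "d > 0" "n \<ge> 1" "R \<ge> 1"
  shows "min (ln (real n)) (ln R) / d\<^sup>2 \<le> real (num_queries T (harmonic_input n R))"
proof -
  let ?X = "harmonic_input n R"
  let ?Q = "queried T ?X \<inter> {..<n}"
  have "card ?Q \<le> num_queries T ?X"
    using card_mono[OF finite_queried Int_lower1] card_queried_le_num_queries by (rule le_trans)
  then have weight: "(\<Sum>q\<in>?Q. real (n - q) * ?X ! q) \<le> real (num_queries T ?X)"
    using sum_mono[of ?Q "\<lambda>q. real (n - q) * ?X ! q" "\<lambda>_. 1"] harmonic_input_weight_le_1
    by fastforce
  have "sum_list ?X \<le> d\<^sup>2 * (\<Sum>q\<in>?Q. real (n - q) * ?X ! q)"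
    using assms(1,2) valid_input_harmonic_input by (rule sum_list_le_queried_weight)
  also have "\<dots> \<le> d\<^sup>2 * real (num_queries T ?X)"
    using weight by (intro mult_left_mono) simp_all
  finally have "sum_list ?X \<le> d\<^sup>2 * real (num_queries T ?X)" .
  then show ?thesis
    using min_ln_le_sum_list_harmonic_input[OF assms(3,4)] assms(2)
    by (simp add: divide_le_eq mult.commute)
qed

theorem theorem2:
  fixes d :: real
  assumes "d > 1"
  shows "\<exists>c > 0. \<forall>n \<ge> 2. \<forall>R \<ge> 2. \<forall>T. approx_alg d n T \<longrightarrow>
           (\<exists>xs. valid_input n xs \<and> (\<exists>x\<in>set xs. 0 < x) \<and>
                 xmax xs / xmin_pos xs \<le> R \<and>
                 real (num_queries T xs) \<ge> c * min (ln (real n)) (ln R))"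
proof (intro exI[of _ "1 / d\<^sup>2"] conjI allI impI)
  show "0 < 1 / d\<^sup>2"
    using assms by simp
  fix n :: nat and R :: real and T
  assume "n \<ge> 2" "R \<ge> 2" "approx_alg d n T"
  then have "n \<ge> 1" "R \<ge> 1" by simp_all
  let ?X = "harmonic_input n R"
  have "1 / d\<^sup>2 * min (ln (real n)) (ln R) \<le> real (num_queries T ?X)"
    using queries_harmonic_input_ge[OF \<open>approx_alg d n T\<close> _ \<open>n \<ge> 1\<close> \<open>R \<ge> 1\<close>] assms by simp
  then show "\<exists>xs. valid_input n xs \<and> (\<exists>x\<in>set xs. 0 < x) \<and>
                 xmax xs / xmin_pos xs \<le> R \<and>
                 real (num_queries T xs) \<ge> 1 / d\<^sup>2 * min (ln (real n)) (ln R)"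
    using valid_input_harmonic_input one_mem_harmonic_input[OF \<open>n \<ge> 1\<close> \<open>R \<ge> 1\<close>]
      harmonic_input_ratio[OF \<open>n \<ge> 1\<close> \<open>R \<ge> 1\<close>]
    by (intro exI[of _ ?X]) (auto intro!: bexI[of _ 1])
qed

end
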